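(* Let $(X,\sigma)$ be a primitive aperiodic $S$-adic subshift based on substitutions $\chi_i:\mathcal A_i\to\mathcal A_{i-1}^+$, $i\in\mathbb N$. If for every $k\in\mathbb N$ there are $i<j$ and letters $a\in\mathcal A_{i-1}$, $b\in\mathcal A_j$ such that $a^k$ is a subword of $\chi_i\circ\cdots\circ\chi_j(b)$, then $(X,\sigma)$ is not linearly recurrent.
   Context: Given finite alphabets $\mathcal A_i$ and substitutions $\chi_i:\mathcal A_i\to\mathcal A_{i-1}^+$ (extended to words by concatenation), the $S$-adic subshift $X$ is the shift-orbit closure of the set of accumulation points of $\{\chi_1\circ\cdots\circ\chi_n(a):n\in\mathbb N,a\in\mathcal A_n\}$, with $\sigma$ the left shift. It is primitive if for every $m\in\mathbb N$ there is $n\ge m$ such that for all $a\in\mathcal A_n$ the word $\chi_m\circ\cdots\circ\chi_n(a)$ contains every letter of $\mathcal A_{m-1}$. It is aperiodic if there are no $x\in X$, $k\in\mathbb N$ with $\sigma^kx=x$. It is linearly recurrent if there is $L$ such that for every $x\in X$ every subword $w$ of $x$ reappears in $x$ with gap at most $L|w|$. *)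

theory Defs
  imports Main "HOL-Library.Sublist"
begin

text \<open>Letters of all alphabets live in one type 'a; the alphabet at level i is the
  set A i. Points of the subshift are two-sided sequences int => 'a.\<close>

definition subst_word :: "('a \<Rightarrow> 'a list) \<Rightarrow> 'a list \<Rightarrow> 'a list" where
  "subst_word f w = concat (map f w)"

text \<open>comp_subst chi m n w = (chi m o ... o chi n)(w) for m <= n; identity if n < m.\<close>
fun comp_subst :: "(nat \<Rightarrow> 'a \<Rightarrow> 'a list) \<Rightarrow> nat \<Rightarrow> nat \<Rightarrow> 'a list \<Rightarrow> 'a list" where
  "comp_subst chi m 0 w = w"
| "comp_subst chi m (Suc n) w =
     (if Suc n < m then w else comp_subst chi m n (subst_word (chi (Suc n)) w))"

definition valid_sadic :: "(nat \<Rightarrow> 'a set) \<Rightarrow> (nat \<Rightarrow> 'a \<Rightarrow> 'a list) \<Rightarrow> bool" where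
  "valid_sadic A chi \<longleftrightarrow>
     (\<forall>i. finite (A i) \<and> A i \<noteq> {}) \<and>
     (\<forall>i\<ge>1. \<forall>a\<in>A i. chi i a \<noteq> [] \<and> set (chi i a) \<subseteq> A (i - 1))"

definition word_at :: "(int \<Rightarrow> 'a) \<Rightarrow> int \<Rightarrow> nat \<Rightarrow> 'a list" where
  "word_at x i n = map (\<lambda>k. x (i + int k)) [0..<n]"

definition shift :: "(int \<Rightarrow> 'a) \<Rightarrow> (int \<Rightarrow> 'a)" where
  "shift x = (\<lambda>i. x (i + 1))"

text \<open>The S-adic subshift: shift-orbit closure of the accumulation points of the words
  chi_1 o ... o chi_n (a), i.e. all two-sided sequences every finite subword of which
  occurs in chi_1 o ... o chi_n (a), a in A n, for arbitrarily large n.\<close>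
definition sadic_subshift :: "(nat \<Rightarrow> 'a set) \<Rightarrow> (nat \<Rightarrow> 'a \<Rightarrow> 'a list) \<Rightarrow> (int \<Rightarrow> 'a) set" where
  "sadic_subshift A chi =
     {x. \<forall>i len N. \<exists>n\<ge>N. \<exists>a\<in>A n. sublist (word_at x i len) (comp_subst chi 1 n [a])}"

definition primitive_sadic :: "(nat \<Rightarrow> 'a set) \<Rightarrow> (nat \<Rightarrow> 'a \<Rightarrow> 'a list) \<Rightarrow> bool" where
  "primitive_sadic A chi \<longleftrightarrow>
     (\<forall>m\<ge>1. \<exists>n\<ge>m. \<forall>a\<in>A n. A (m - 1) \<subseteq> set (comp_subst chi m n [a]))"

definition aperiodic :: "(int \<Rightarrow> 'a) set \<Rightarrow> bool" where
  "aperiodic X \<longleftrightarrow> \<not> (\<exists>x\<in>X. \<exists>k::nat. k \<ge> 1 \<and> (shift ^^ k) x = x)"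

definition linearly_recurrent :: "(int \<Rightarrow> 'a) set \<Rightarrow> bool" where
  "linearly_recurrent X \<longleftrightarrow>
     (\<exists>L::nat. \<forall>x\<in>X. \<forall>i. \<forall>n::nat. n \<ge> 1 \<longrightarrow>
        (\<forall>p. \<exists>q. p < q \<and> q \<le> p + int (L * n) \<and> word_at x q n = word_at x i n))"

end

theory Submission
  imports Defs "HOL-Library.Infinite_Set"
begin

text \<open>Suppose the subshift X were linearly recurrent with constant L. The hypothesis and
  primitivity give a nonempty word u and a level n0 such that u^(2L+2) occurs in every
  level-n0 block chi_1 o ... o chi_n0 (c). Every level-n word with n >= n0 is a concatenation
  of such blocks, so every point x of X contains u^(2L+2). Linear recurrence brings every
  subword of length |u| + 1 of x back into this |u|-periodic stretch within distance
  L (|u| + 1), hence x is |u|-periodic everywhere, contradicting aperiodicity.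
  That X has a point at all is a compactness (Koenig) argument, which works because the
  hypothesis forces the level-n words to become arbitrarily long.\<close>

section \<open>Combinatorics on words\<close>

lemma sublist_concat_contains_block:
  assumes "sublist w (concat bs)" "\<forall>b\<in>set bs. length b \<le> B" "2 * B < length w"
  shows "\<exists>b\<in>set bs. sublist b w"
proof -
  obtain ps ss where "concat bs = ps @ w @ ss"
    using assms(1) by (auto simp: sublist_def)
  then show ?thesis
    using assms(2)
  proof (induction bs arbitrary: ps)
    case Nil
    then show ?case using assms(3) by simp
  next
    case (Cons b bs)
    show ?case
    proof (cases "length b \<le> length ps")
      case True
      then have "concat bs = drop (length b) ps @ w @ ss"
        using arg_cong[OF Cons.prems(1), of "drop (length b)"] by simp
      then show ?thesis
        using Cons.IH Cons.prems(2) by auto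
    next
      case False
      define d where "d = length b - length ps"
      have "d \<le> B"
        using Cons.prems(2) unfolding d_def by auto
      have "concat bs = drop d w @ ss"
        using arg_cong[OF Cons.prems(1), of "drop (length b)"] False assms(3) \<open>d \<le> B\<close>
        unfolding d_def by simp
      moreover have "B < length (drop d w)"
        using assms(3) \<open>d \<le> B\<close> by simp
      ultimately obtain c cs where bs: "bs = c # cs" and split: "drop d w @ ss = c @ concat cs"
        by (cases bs) auto
      from split have "prefix c (drop d w @ ss)"
        by (rule prefixI)
      moreover have "length c \<le> length (drop d w)"
        using Cons.prems(2) bs \<open>B < length (drop d w)\<close> by simp
      ultimately have "prefix c (drop d w)"
        using prefix_length_prefix[of c "drop d w @ ss" "drop d w"] by simp
      then have "sublist c w"
        using sublist_order.order_trans by blast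
      then show ?thesis
        using bs by simp
    qed
  qed
qed

lemma sublist_word_at_occurs:
  assumes "sublist v (word_at x i n)"
  shows "\<exists>s. word_at x s (length v) = v"
proof -
  obtain ps ss where split: "word_at x i n = ps @ v @ ss"
    using assms by (auto simp: sublist_def)
  have "word_at x (i + int (length ps)) (length v) = v"
  proof (rule nth_equalityI)
    fix t assume "t < length (word_at x (i + int (length ps)) (length v))"
    then have t: "t < length v"
      by (simp add: word_at_def)
    then have "length ps + t < n"
      using arg_cong[OF split, of length] by (simp add: word_at_def)
    then have "x (i + int (length ps + t)) = v ! t"
      using arg_cong[OF split, of "\<lambda>w. w ! (length ps + t)"] t
      by (simp add: word_at_def nth_append)
    then show "word_at x (i + int (length ps)) (length v) ! t = v ! t"
      using t by (simp add: word_at_def add.assoc)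
  qed (simp add: word_at_def)
  then show ?thesis ..
qed

lemma nth_concat_replicate_shift:
  assumes "t + length u < k * length u"
  shows "concat (replicate k u) ! (t + length u) = concat (replicate k u) ! t"
proof (cases k)
  case (Suc k')
  have "concat (replicate k' u) @ u = u @ concat (replicate k' u)"
    by (induction k') auto
  then have "concat (replicate k u) = u @ concat (replicate k' u)"
       "concat (replicate k u) = concat (replicate k' u) @ u"
    using Suc by simp_all
  moreover have "t < length (concat (replicate k' u))"
    using assms Suc by (simp add: length_concat sum_list_replicate)
  ultimately show ?thesis
    by (metis nth_append nth_append_length_plus add.commute)
qed (use assms in simp)

lemma funpow_shift: "(shift ^^ n) x = (\<lambda>i. x (i + int n))"
  by (induction n) (auto simp: shift_def add.assoc)

section \<open>Two-sided limits of centred words\<close>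

lemma centred_words_nested:
  assumes "\<And>m. \<exists>c d. ws (Suc m) = c # ws m @ [d]" "m \<le> M"
  shows "\<exists>l r. ws M = l @ ws m @ r \<and> length l = M - m"
  using assms(2)
proof (induction M rule: dec_induct)
  case (step M)
  then obtain l r where "ws M = l @ ws m @ r" "length l = M - m"
    by blast
  moreover obtain c d where "ws (Suc M) = c # ws M @ [d]"
    using assms(1) by blast
  ultimately have "ws (Suc M) = (c # l) @ ws m @ (r @ [d])" "length (c # l) = Suc M - m"
    using step.hyps by auto
  then show ?case
    by blast
qed auto

lemma two_sided_limit_of_centred_words:
  assumes "ws 0 = []" and grow: "\<And>m. \<exists>c d. ws (Suc m) = c # ws m @ [d]"
  shows "\<exists>x::int \<Rightarrow> 'a. \<forall>i n. \<exists>m. sublist (word_at x i n) (ws m)"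
proof -
  have len: "length (ws m) = 2 * m" for m
  proof (induction m)
    case (Suc m)
    obtain c d where "ws (Suc m) = c # ws m @ [d]"
      using grow by blast
    with Suc show ?case
      by simp
  qed (simp add: assms(1))
  \<comment> \<open>ws m is centred in every later ws M, so x i can be read off any ws M with |i| < M\<close>
  define x where "x i = ws (Suc (nat \<bar>i\<bar>)) ! nat (i + int (Suc (nat \<bar>i\<bar>)))" for i
  have x: "x i = ws M ! nat (i + int M)" if iM: "nat \<bar>i\<bar> < M" for i M
  proof -
    let ?m = "Suc (nat \<bar>i\<bar>)"
    obtain l r where "ws M = l @ ws ?m @ r" and len_l: "length l = M - ?m"
      using centred_words_nested[of ws, OF grow, of ?m M] iM by auto
    moreover have "nat (i + int ?m) < length (ws ?m)"
      using len by auto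
    moreover have "nat (i + int M) = length l + nat (i + int ?m)"
      using len_l iM by arith
    ultimately show ?thesis
      unfolding x_def by (simp add: nth_append)
  qed
  have "sublist (word_at x i n) (ws (Suc (nat \<bar>i\<bar> + n)))" for i n
  proof -
    let ?M = "Suc (nat \<bar>i\<bar> + n)"
    have "word_at x i n = take n (drop (nat (i + int ?M)) (ws ?M))"
    proof (rule nth_equalityI)
      fix t assume "t < length (word_at x i n)"
      then have t: "t < n"
        by (simp add: word_at_def)
      then have "x (i + int t) = ws ?M ! nat (i + int t + int ?M)"
        by (intro x) arith
      moreover have "nat (i + int t + int ?M) = nat (i + int ?M) + t"
        by arith
      ultimately show "word_at x i n ! t = take n (drop (nat (i + int ?M)) (ws ?M)) ! t"
        using t len by (simp add: word_at_def)
    qed (use len in \<open>simp add: word_at_def\<close>)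
    then show ?thesis
      by (metis sublist_order.order_trans sublist_drop sublist_take)
  qed
  then show ?thesis
    by blast
qed

lemma exists_two_sided_sequence:
  assumes "P []" and grow: "\<And>w. P w \<Longrightarrow> \<exists>c d. P (c # w @ [d])"
  shows "\<exists>x::int \<Rightarrow> 'a. \<forall>i n. \<exists>w. P w \<and> sublist (word_at x i n) w"
proof -
  have "\<forall>w. \<exists>w'. P w \<longrightarrow> P w' \<and> (\<exists>c d. w' = c # w @ [d])"
    using grow by blast
  then obtain g where g: "\<And>w. P w \<Longrightarrow> P (g w) \<and> (\<exists>c d. g w = c # w @ [d])"
    by metis
  define ws where "ws m = (g ^^ m) []" for m
  have P_ws: "P (ws m)" for m
    by (induction m) (use assms(1) g in \<open>auto simp: ws_def\<close>)
  have "\<exists>c d. ws (Suc m) = c # ws m @ [d]" for m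
    using g[OF P_ws[of m]] by (simp add: ws_def)
  then obtain x :: "int \<Rightarrow> 'a" where "\<forall>i n. \<exists>m. sublist (word_at x i n) (ws m)"
    using two_sided_limit_of_centred_words[of ws] by (auto simp: ws_def)
  then show ?thesis
    using P_ws by blast
qed

section \<open>Recurrence forces periodicity\<close>

lemma periodic_if_recurrent_and_locally_periodic:
  fixes x :: "int \<Rightarrow> 'a"
  assumes rec: "\<And>i p. \<exists>q. p < q \<and> q \<le> p + int (L * (P + 1)) \<and>
      word_at x q (P + 1) = word_at x i (P + 1)"
    and loc: "\<And>t. t < L * (P + 1) \<Longrightarrow> x (s + int t + int P) = x (s + int t)"
  shows "x (i + int P) = x i"
proof -
  \<comment> \<open>the word of length P + 1 at i returns into the P-periodic stretch starting at s\<close>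
  obtain q where q: "s - 1 < q" "q \<le> s - 1 + int (L * (P + 1))"
    and same: "word_at x q (P + 1) = word_at x i (P + 1)"
    using rec by blast
  define t where "t = nat (q - s)"
  have "q = s + int t" "t < L * (P + 1)"
    using q unfolding t_def by (auto simp: nat_less_iff simp del: of_nat_mult)
  moreover have "x q = x i" "x (q + int P) = x (i + int P)"
    using arg_cong[OF same, of "\<lambda>w. w ! 0"] arg_cong[OF same, of "\<lambda>w. w ! P"]
    by (simp_all add: word_at_def del: upt_Suc)
  ultimately show ?thesis
    using loc by metis
qed

lemma periodic_if_recurrent_and_contains_power:
  fixes x :: "int \<Rightarrow> 'a"
  assumes rec: "\<forall>n::nat. n \<ge> 1 \<longrightarrow>
      (\<forall>i p. \<exists>q. p < q \<and> q \<le> p + int (L * n) \<and> word_at x q n = word_at x i n)"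
    and "u \<noteq> []"
    and s: "word_at x s (length (concat (replicate (2 * L + 2) u))) = concat (replicate (2 * L + 2) u)"
  shows "x (i + int (length u)) = x i"
proof (rule periodic_if_recurrent_and_locally_periodic)
  let ?P = "length u" and ?V = "concat (replicate (2 * L + 2) u)"
  show "\<exists>q. p < q \<and> q \<le> p + int (L * (?P + 1)) \<and> word_at x q (?P + 1) = word_at x i (?P + 1)"
    for i p
    using rec by (meson le_add2)
  have len_V: "length ?V = (2 * L + 2) * ?P"
    by (simp add: length_concat sum_list_replicate)
  have x_V: "x (s + int t) = ?V ! t" if "t < length ?V" for t
    using arg_cong[OF s, of "\<lambda>w. w ! t"] that by (simp add: word_at_def)
  fix t assume "t < L * (?P + 1)"
  then have "t < L * ?P + L"
    by (simp add: algebra_simps)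
  moreover have "L \<le> L * ?P"
    using \<open>u \<noteq> []\<close> by (simp add: Suc_le_eq)
  moreover have "(2 * L + 2) * ?P = 2 * (L * ?P) + 2 * ?P"
    by (simp add: algebra_simps)
  ultimately have "t + ?P < (2 * L + 2) * ?P"
    by linarith
  then show "x (s + int t + int ?P) = x (s + int t)"
    using x_V[of t] x_V[of "t + ?P"] len_V nth_concat_replicate_shift[of t u "2 * L + 2"]
    by (simp add: add.assoc)
qed

section \<open>Compositions of substitutions\<close>

lemma subst_word_Nil [simp]: "subst_word f [] = []"
  by (simp add: subst_word_def)

lemma subst_word_append [simp]: "subst_word f (v @ w) = subst_word f v @ subst_word f w"
  by (simp add: subst_word_def)

lemma comp_subst_Nil [simp]: "comp_subst chi m n [] = []"
  by (induction n) auto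

lemma comp_subst_append: "comp_subst chi m n (v @ w) = comp_subst chi m n v @ comp_subst chi m n w"
  by (induction n arbitrary: v w) auto

lemma comp_subst_eq_concat_map:
  "comp_subst chi m n w = concat (map (\<lambda>c. comp_subst chi m n [c]) w)"
proof (induction w)
  case (Cons a w)
  then show ?case
    using comp_subst_append[of chi m n "[a]" w] by simp
qed simp

lemma comp_subst_replicate:
  "comp_subst chi m n (replicate k a) = concat (replicate k (comp_subst chi m n [a]))"
  by (subst comp_subst_eq_concat_map) simp

lemma comp_subst_mono: "sublist v w \<Longrightarrow> sublist (comp_subst chi m n v) (comp_subst chi m n w)"
  unfolding sublist_def by (auto simp: comp_subst_append) blast

lemma comp_subst_empty_range [simp]: "comp_subst chi (Suc n) n w = w"
  by (cases n) auto

lemma comp_subst_split: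
  "m \<le> Suc j \<Longrightarrow> j \<le> n \<Longrightarrow>
   comp_subst chi m n w = comp_subst chi m j (comp_subst chi (Suc j) n w)"
proof (induction n arbitrary: w)
  case (Suc n)
  then show ?case
    by (cases "j = Suc n") auto
qed simp

lemma comp_subst_in_alphabet:
  assumes "valid_sadic A chi" "1 \<le> m" "m \<le> Suc n" "set w \<subseteq> A n"
  shows "set (comp_subst chi m n w) \<subseteq> A (m - 1)"
  using assms(3,4)
proof (induction n arbitrary: w)
  case (Suc n)
  have "set (subst_word (chi (Suc n)) w) \<subseteq> A n"
    using assms(1) Suc.prems(2) by (fastforce simp: valid_sadic_def subst_word_def)
  with Suc show ?case
    by (cases "m = Suc (Suc n)") auto
qed simp

lemma comp_subst_nonempty:
  assumes "valid_sadic A chi" "m \<le> Suc n" "set w \<subseteq> A n" "w \<noteq> []"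
  shows "comp_subst chi m n w \<noteq> []"
  using assms(2-4)
proof (induction n arbitrary: w)
  case (Suc n)
  have "set (subst_word (chi (Suc n)) w) \<subseteq> A n"
    using assms(1) Suc.prems(2) by (fastforce simp: valid_sadic_def subst_word_def)
  moreover have "subst_word (chi (Suc n)) w \<noteq> []"
    using assms(1) Suc.prems(2,3) by (cases w) (auto simp: valid_sadic_def subst_word_def)
  ultimately show ?case
    using Suc by (cases "m = Suc (Suc n)") auto
qed simp

lemma comp_subst_blocks:
  assumes "valid_sadic A chi" "n0 \<le> n" "d \<in> A n"
  obtains cs where "cs \<noteq> []" "set cs \<subseteq> A n0"
    "comp_subst chi 1 n [d] = concat (map (\<lambda>c. comp_subst chi 1 n0 [c]) cs)"
proof
  let ?cs = "comp_subst chi (Suc n0) n [d]"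
  show "?cs \<noteq> []" "set ?cs \<subseteq> A n0"
    using comp_subst_nonempty[OF assms(1), of "Suc n0" n "[d]"]
      comp_subst_in_alphabet[OF assms(1), of "Suc n0" n "[d]"] assms(2,3) by auto
  have "comp_subst chi 1 n [d] = comp_subst chi 1 n0 ?cs"
    using assms(2) by (rule comp_subst_split[rotated]) simp
  then show "comp_subst chi 1 n [d] = concat (map (\<lambda>c. comp_subst chi 1 n0 [c]) ?cs)"
    by (simp only: comp_subst_eq_concat_map[of _ _ _ ?cs])
qed

lemma sublist_block_of_lower_level:
  assumes "valid_sadic A chi" "n0 \<le> n" "d \<in> A n"
  obtains c where "c \<in> A n0" "sublist (comp_subst chi 1 n0 [c]) (comp_subst chi 1 n [d])"
proof -
  obtain cs where "cs \<noteq> []" "set cs \<subseteq> A n0"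
    "comp_subst chi 1 n [d] = concat (map (\<lambda>c. comp_subst chi 1 n0 [c]) cs)"
    using comp_subst_blocks[OF assms] .
  then show ?thesis
    using that[of "hd cs"] by (cases cs) auto
qed

lemma primitive_blocks_sublist:
  assumes "primitive_sadic A chi"
  obtains n0 where "\<forall>b\<in>A j. \<forall>c\<in>A n0. sublist (comp_subst chi 1 j [b]) (comp_subst chi 1 n0 [c])"
proof -
  obtain n0 where n0: "Suc j \<le> n0" "\<forall>c\<in>A n0. A j \<subseteq> set (comp_subst chi (Suc j) n0 [c])"
    using assms unfolding primitive_sadic_def by (metis diff_Suc_1 le_add1 plus_1_eq_Suc)
  have "sublist (comp_subst chi 1 j [b]) (comp_subst chi 1 n0 [c])" if "b \<in> A j" "c \<in> A n0" for b c
  proof -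
    have "sublist [b] (comp_subst chi (Suc j) n0 [c])"
      using n0(2) that by (metis in_set_conv_decomp sublist_appendI append_Cons append_Nil subsetD)
    then have "sublist (comp_subst chi 1 j [b]) (comp_subst chi 1 j (comp_subst chi (Suc j) n0 [c]))"
      by (rule comp_subst_mono)
    also have "comp_subst chi 1 j (comp_subst chi (Suc j) n0 [c]) = comp_subst chi 1 n0 [c]"
      using n0(1) by (simp flip: comp_subst_split)
    finally show ?thesis .
  qed
  then show ?thesis
    using that by blast
qed

lemma power_sublist_of_all_blocks:
  assumes "primitive_sadic A chi" "1 \<le> i" "i < j" "b \<in> A j"
    "sublist (replicate k a) (comp_subst chi i j [b])"
  obtains n0 where
    "\<forall>c\<in>A n0. sublist (concat (replicate k (comp_subst chi 1 (i - 1) [a]))) (comp_subst chi 1 n0 [c])"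
proof -
  have "comp_subst chi 1 j [b] = comp_subst chi 1 (i - 1) (comp_subst chi i j [b])"
    using assms(2,3) comp_subst_split[of 1 "i - 1" j chi "[b]"] by simp
  then have "sublist (concat (replicate k (comp_subst chi 1 (i - 1) [a]))) (comp_subst chi 1 j [b])"
    using comp_subst_mono[OF assms(5), of chi 1 "i - 1"] by (simp add: comp_subst_replicate)
  moreover obtain n0 where
    "\<forall>c\<in>A n0. sublist (comp_subst chi 1 j [b]) (comp_subst chi 1 n0 [c])"
    using primitive_blocks_sublist[OF assms(1)] assms(4) by metis
  ultimately show ?thesis
    using that sublist_order.order_trans by blast
qed

lemma common_power_in_blocks:
  assumes "valid_sadic A chi" "primitive_sadic A chi"
    and "\<forall>k::nat. k \<ge> 1 \<longrightarrow> (\<exists>i j a b. 1 \<le> i \<and> i < j \<and> a \<in> A (i - 1) \<and> b \<in> A j \<and>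
            sublist (replicate k a) (comp_subst chi i j [b]))"
    and "k \<ge> 1"
  obtains u n0 where "u \<noteq> []" "\<forall>c\<in>A n0. sublist (concat (replicate k u)) (comp_subst chi 1 n0 [c])"
proof -
  obtain i j a b where ij: "1 \<le> i" "i < j" "a \<in> A (i - 1)" "b \<in> A j"
    and power: "sublist (replicate k a) (comp_subst chi i j [b])"
    using assms(3,4) by blast
  have "comp_subst chi 1 (i - 1) [a] \<noteq> []"
    using comp_subst_nonempty[OF assms(1), of 1 "i - 1" "[a]"] ij(3) by simp
  moreover obtain n0 where "\<forall>c\<in>A n0.
      sublist (concat (replicate k (comp_subst chi 1 (i - 1) [a]))) (comp_subst chi 1 n0 [c])"
    using power_sublist_of_all_blocks[OF assms(2) ij(1,2,4) power] .
  ultimately show ?thesis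
    using that by blast
qed

lemma block_lengths_unbounded:
  assumes "valid_sadic A chi" "primitive_sadic A chi"
    and "\<forall>k::nat. k \<ge> 1 \<longrightarrow> (\<exists>i j a b. 1 \<le> i \<and> i < j \<and> a \<in> A (i - 1) \<and> b \<in> A j \<and>
            sublist (replicate k a) (comp_subst chi i j [b]))"
  shows "\<forall>K N. \<exists>n\<ge>N. \<exists>a\<in>A n. K \<le> length (comp_subst chi 1 n [a])"
proof (intro allI)
  fix K N :: nat
  obtain u n0 where "u \<noteq> []"
    and u: "\<forall>c\<in>A n0. sublist (concat (replicate (Suc K) u)) (comp_subst chi 1 n0 [c])"
    using common_power_in_blocks[OF assms, of "Suc K"] by auto
  then have "K \<le> length (concat (replicate (Suc K) u))"
    by (cases u) (simp_all add: length_concat sum_list_replicate)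
  obtain d where d: "d \<in> A (max N n0)"
    using assms(1) unfolding valid_sadic_def by blast
  obtain c where "c \<in> A n0" "sublist (comp_subst chi 1 n0 [c]) (comp_subst chi 1 (max N n0) [d])"
    using sublist_block_of_lower_level[OF assms(1) max.cobounded2 d] by blast
  then have "K \<le> length (comp_subst chi 1 (max N n0) [d])"
    using u \<open>K \<le> length (concat (replicate (Suc K) u))\<close>
    by (meson le_trans sublist_length_le)
  then show "\<exists>n\<ge>N. \<exists>a\<in>A n. K \<le> length (comp_subst chi 1 n [a])"
    using d max.cobounded1 by blast
qed

section \<open>Points of the subshift\<close>

definition occurs_with_margin ::
    "(nat \<Rightarrow> 'a set) \<Rightarrow> (nat \<Rightarrow> 'a \<Rightarrow> 'a list) \<Rightarrow> 'a list \<Rightarrow> nat \<Rightarrow> bool" where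
  "occurs_with_margin A chi w t \<longleftrightarrow> (\<exists>n\<ge>t. \<exists>a\<in>A n. \<exists>l r.
     t \<le> length l \<and> t \<le> length r \<and> sublist (l @ w @ r) (comp_subst chi 1 n [a]))"

definition extendable :: "(nat \<Rightarrow> 'a set) \<Rightarrow> (nat \<Rightarrow> 'a \<Rightarrow> 'a list) \<Rightarrow> 'a list \<Rightarrow> bool" where
  "extendable A chi w \<longleftrightarrow> (\<forall>t. occurs_with_margin A chi w t)"

lemma occurs_with_margin_mono:
  "occurs_with_margin A chi w t' \<Longrightarrow> t \<le> t' \<Longrightarrow> occurs_with_margin A chi w t"
  unfolding occurs_with_margin_def by (meson order_trans)

lemma occurs_with_margin_Suc:
  assumes "valid_sadic A chi" "occurs_with_margin A chi w (Suc t)"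
  shows "\<exists>c\<in>A 0. \<exists>d\<in>A 0. occurs_with_margin A chi (c # w @ [d]) t"
proof -
  obtain n a l r where occ: "n \<ge> Suc t" "a \<in> A n" "Suc t \<le> length l" "Suc t \<le> length r"
    "sublist (l @ w @ r) (comp_subst chi 1 n [a])"
    using assms(2) unfolding occurs_with_margin_def by blast
  then obtain l' c d r' where l: "l = l' @ [c]" and r: "r = d # r'"
    by (metis Suc_le_length_iff rev_exhaust le_zero_eq list.size(3) nat.distinct(1))
  have "set (l @ w @ r) \<subseteq> A 0"
    using set_mono_sublist[OF occ(5)] comp_subst_in_alphabet[OF assms(1), of 1 n "[a]"] occ(2)
    by auto
  then have "c \<in> A 0" "d \<in> A 0"
    using l r by auto
  moreover have "t \<le> length l'" "t \<le> length r'"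
    "sublist (l' @ (c # w @ [d]) @ r') (comp_subst chi 1 n [a])"
    using occ l r by auto
  then have "occurs_with_margin A chi (c # w @ [d]) t"
    unfolding occurs_with_margin_def using occ(1,2) by (meson Suc_leD)
  ultimately show ?thesis
    by blast
qed

lemma extendable_Nil:
  assumes "\<forall>K N. \<exists>n\<ge>N. \<exists>a\<in>A n. K \<le> length (comp_subst chi 1 n [a])"
  shows "extendable A chi []"
  unfolding extendable_def occurs_with_margin_def
proof
  fix t
  obtain n a where "n \<ge> t" "a \<in> A n" "2 * t \<le> length (comp_subst chi 1 n [a])"
    using assms by blast
  then show "\<exists>n\<ge>t. \<exists>a\<in>A n. \<exists>l r. t \<le> length l \<and> t \<le> length r \<and>
      sublist (l @ [] @ r) (comp_subst chi 1 n [a])"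
    by (intro exI[of _ n] conjI bexI[of _ a] exI[of _ "take t (comp_subst chi 1 n [a])"]
        exI[of _ "drop t (comp_subst chi 1 n [a])"]) auto
qed

text \<open>Pigeonhole: one pair of letters works for infinitely many margins, hence for all.\<close>
lemma extendable_grow:
  assumes "valid_sadic A chi" "extendable A chi w"
  shows "\<exists>c d. extendable A chi (c # w @ [d])"
proof -
  have "\<forall>t. \<exists>p\<in>A 0 \<times> A 0. occurs_with_margin A chi (fst p # w @ [snd p]) t"
    using occurs_with_margin_Suc[OF assms(1)] assms(2) unfolding extendable_def by fastforce
  then obtain f where f: "\<And>t. f t \<in> A 0 \<times> A 0"
    "\<And>t. occurs_with_margin A chi (fst (f t) # w @ [snd (f t)]) t"
    by metis
  have "finite (range f)"
    using assms(1) f(1) unfolding valid_sadic_def by (meson finite_SigmaI finite_subset image_subsetI)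
  then obtain p where "infinite (f -` {p})"
    using inf_img_fin_dom by blast
  then have "\<forall>t. \<exists>t'\<ge>t. f t' = p"
    by (simp add: infinite_nat_iff_unbounded_le)
  then have "occurs_with_margin A chi (fst p # w @ [snd p]) t" for t
    using f(2) occurs_with_margin_mono by metis
  then show ?thesis
    unfolding extendable_def by blast
qed

lemma sadic_subshift_nonempty:
  assumes "valid_sadic A chi" "\<forall>K N. \<exists>n\<ge>N. \<exists>a\<in>A n. K \<le> length (comp_subst chi 1 n [a])"
  shows "sadic_subshift A chi \<noteq> {}"
proof -
  obtain x :: "int \<Rightarrow> 'a" where x: "\<forall>i n. \<exists>w. extendable A chi w \<and> sublist (word_at x i n) w"
    using exists_two_sided_sequence[of "extendable A chi"]
      extendable_Nil[OF assms(2)] extendable_grow[OF assms(1)] by blast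
  have "x \<in> sadic_subshift A chi"
    unfolding sadic_subshift_def
  proof (intro CollectI allI)
    fix i len N
    obtain w where "extendable A chi w" and factor: "sublist (word_at x i len) w"
      using x by blast
    then obtain n a l r where "n \<ge> N" "a \<in> A n" "sublist (l @ w @ r) (comp_subst chi 1 n [a])"
      unfolding extendable_def occurs_with_margin_def by blast
    then show "\<exists>n\<ge>N. \<exists>a\<in>A n. sublist (word_at x i len) (comp_subst chi 1 n [a])"
      using factor by (meson sublist_appendI sublist_order.order_trans)
  qed
  then show ?thesis
    by blast
qed

lemma sadic_subshift_contains_common_factor:
  assumes "valid_sadic A chi" "x \<in> sadic_subshift A chi"
    and "\<forall>c\<in>A n0. sublist v (comp_subst chi 1 n0 [c])"
  shows "\<exists>s. word_at x s (length v) = v"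
proof -
  define block where "block c = comp_subst chi 1 n0 [c]" for c
  define B where "B = Max ((\<lambda>c. length (block c)) ` A n0)"
  have B: "length (block c) \<le> B" if "c \<in> A n0" for c
    using assms(1) that unfolding B_def valid_sadic_def by simp
  obtain n d where "n \<ge> n0" "d \<in> A n"
    and window: "sublist (word_at x 0 (2 * B + 1)) (comp_subst chi 1 n [d])"
    using assms(2) unfolding sadic_subshift_def by blast
  then obtain cs where "set cs \<subseteq> A n0" "comp_subst chi 1 n [d] = concat (map block cs)"
    using comp_subst_blocks[OF assms(1)] unfolding block_def by metis
  then obtain c where "c \<in> A n0" "sublist (block c) (word_at x 0 (2 * B + 1))"
    using sublist_concat_contains_block[of "word_at x 0 (2 * B + 1)" "map block cs" B] window B
    by (auto simp: word_at_def)
  then have "sublist v (word_at x 0 (2 * B + 1))"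
    using assms(3) sublist_order.order_trans unfolding block_def by blast
  then show ?thesis
    by (rule sublist_word_at_occurs)
qed

theorem lemma2p5:
  fixes A :: "nat \<Rightarrow> 'a set" and chi :: "nat \<Rightarrow> 'a \<Rightarrow> 'a list"
  assumes "valid_sadic A chi"
    and "primitive_sadic A chi"
    and "aperiodic (sadic_subshift A chi)"
    and "\<forall>k::nat. k \<ge> 1 \<longrightarrow> (\<exists>i j a b. 1 \<le> i \<and> i < j \<and> a \<in> A (i - 1) \<and> b \<in> A j \<and>
            sublist (replicate k a) (comp_subst chi i j [b]))"
  shows "\<not> linearly_recurrent (sadic_subshift A chi)"
proof
  assume "linearly_recurrent (sadic_subshift A chi)"
  then obtain L :: nat where LR: "\<forall>x\<in>sadic_subshift A chi. \<forall>n::nat. n \<ge> 1 \<longrightarrow>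
      (\<forall>i p. \<exists>q. p < q \<and> q \<le> p + int (L * n) \<and> word_at x q n = word_at x i n)"
    unfolding linearly_recurrent_def by blast
  obtain u n0 where "u \<noteq> []"
    and u: "\<forall>c\<in>A n0. sublist (concat (replicate (2 * L + 2) u)) (comp_subst chi 1 n0 [c])"
    using common_power_in_blocks[OF assms(1,2,4), of "2 * L + 2"] by auto
  obtain x where x: "x \<in> sadic_subshift A chi"
    using sadic_subshift_nonempty[OF assms(1) block_lengths_unbounded[OF assms(1,2,4)]] by blast
  obtain s where
    "word_at x s (length (concat (replicate (2 * L + 2) u))) = concat (replicate (2 * L + 2) u)"
    using sadic_subshift_contains_common_factor[OF assms(1) x u] by blast
  then have "x (i + int (length u)) = x i" for i
    using periodic_if_recurrent_and_contains_power[OF _ \<open>u \<noteq> []\<close>] LR x by blast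
  then have "(shift ^^ length u) x = x"
    by (simp add: funpow_shift)
  moreover have "length u \<ge> 1"
    using \<open>u \<noteq> []\<close> by (simp add: Suc_le_eq)
  ultimately show False
    using assms(3) x unfolding aperiodic_def by blast
qed

end
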